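(* In the protocol IT-HS described in the context, with $f<\frac{n}{3}$ Byzantine parties, if two nonfaulty parties send the messages $\langle done,val\rangle$ and $\langle done,val'\rangle$ via the final handler of message processing (i.e. upon receiving $\langle lock,\cdot,v\rangle$ messages with the same value from $n-f$ parties), then $val=val'$.
   Context: Model. $n$ parties with inputs $x_i$; up to $f$ Byzantine (arbitrary behaviour), the rest nonfaulty; authenticated point-to-point channels; partial synchrony: after an unknown time GST every message arrives within known $\Delta$ time and clocks are synchronized, before GST delays are arbitrary but finite. Protocol IT-HS (party $i$). Variables: $lock\gets 0$, $lock\_val\gets x_i$; $key3\gets 0$, $key3\_val\gets x_i$; $key2\gets 0$, $key2\_val\gets x_i$, $prev\_key2\gets -1$; $key1\gets 0$, $key1\_val\gets x_i$, $prev\_key1\gets -1$; $view\gets 0$; $highest\_request[j]\gets 0$, $highest\_abort[j]\gets 0$ for $j\in[n]$. "Send-upon-join $m$": for each $j$, send $m$ to $j$ as soon as $highest\_request[j]$ equals the current view. Background: (B1) on $\langle request,v\rangle$ from $j$, $highest\_request[j]\gets\max(highest\_request[j],v)$. (B2) on $\langle done,val\rangle$ from $f+1$ parties with the same $val$: if no $done$ sent yet, send $\langle done,val\rangle$ to all. (B3) on $\langle done,val\rangle$ from $n-f$ parties with the same $val$: decide $val$, terminate. (B4) on $\langle abort,v\rangle$ from $j$ with $highest\_abort[j]<v$: $highest\_abort[j]\gets v$; $u\gets$ the $(f+1)$-th largest entry of $highest\_abort$; if $u>highest\_abort[i]$ send $\langle abort,u\rangle$ to all and set $highest\_abort[i]\gets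 u$; $w\gets$ the $(n-f)$-th largest entry; if $w\ge view$ set $view\gets w+1$. Views: for each value $v$ of $view$, while $view=v$: fresh per-view state; after $11\Delta$ local time send $\langle abort,v\rangle$ to all; ignore other views' messages except $abort$, $done$, $request$; primary $p=(v\bmod n)+1$. View change: send $\langle request,v\rangle$ to all; when $highest\_request[p]=v$ send $\langle suggest,key3,key3\_val,key2,key2\_val,prev\_key2,v\rangle$ to $p$; send-upon-join $\langle proof,key1,key1\_val,prev\_key1,v\rangle$. If $i=p$: upon first $\langle suggest,k3,v3,k2,v2,pk2,v\rangle$ from a party, if $pk2<k2<v$ add $(k2,v2,pk2)$ to $key2\_proofs$; if $k3=0$ add $(k3,v3)$ to $suggestions$; else if $k3<v$ add $(k3,v3)$ as soon as at least $f+1$ triples $(k,w,pk)\in key2\_proofs$ satisfy $k3\le pk$ or ($k3\le k$ and $w=v3$); once $|suggestions|\ge n-f$, send-upon-join $\langle propose,k,w,v\rangle$ for $(k,w)\in suggestions$ with maximal $k$. Message processing: upon first $\langle proof,k1,v1,pk1,v\rangle$ from a party, if $v>k1>pk1$ add $(k1,v1,pk1)$ to $proofs$. Upon first $\langle propose,key,val,v\rangle$ from $p$: if $lock=0$ or $val=lock\_val$, send-upon-join $\langle echo,val,v\rangle$; else if $v>key\ge lock$, then once at least $f+1$ triples $(k,w,pk)\in proofs$ satisfy $lock\le pk$ or ($lock\le k$ and $w\ne lock\_val$), send-upon-join $\langle echo,val,v\rangle$. Upon $\langle echo,val,v\rangle$ from $n-f$ parties with the same $val$: send-upon-join $\langle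 key1,val,v\rangle$; if $key1\_val\ne val$ then $prev\_key1\gets key1$, $key1\_val\gets val$; $key1\gets v$. Upon $\langle key1,val,v\rangle$ from $n-f$ parties (same $val$): send-upon-join $\langle key2,val,v\rangle$; if $key2\_val\ne val$ then $prev\_key2\gets key2$, $key2\_val\gets val$; $key2\gets v$. Upon $\langle key2,val,v\rangle$ from $n-f$ (same $val$): send-upon-join $\langle key3,val,v\rangle$; $key3\gets v$, $key3\_val\gets val$. Upon $\langle key3,val,v\rangle$ from $n-f$ (same $val$): send-upon-join $\langle lock,val,v\rangle$; $lock\gets v$, $lock\_val\gets val$. Final handler: upon $\langle lock,val,v\rangle$ from $n-f$ (same $val$): if no $done$ sent yet, send $\langle done,val\rangle$ to all. *)

theory Defs
  imports Main "HOL-Library.Multiset"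
begin

(* Parties are 1..n; primary of view v is (v mod n) + 1.
   Keys (key1, key2, key3, lock and the prev_ fields) are integers
   (prev fields start at -1); views are natural numbers.
   ================================================================ *)

datatype 'v msg =
    MRequest nat
  | MDone 'v
  | MAbort nat
  | MSuggest int 'v int 'v int nat      (* k3 v3 k2 v2 pk2 view *)
  | MProof int 'v int nat               (* k1 v1 pk1 view *)
  | MPropose int 'v nat                 (* key val view *)
  | MEcho 'v nat
  | MKey1 'v nat
  | MKey2 'v nat
  | MKey3 'v nat
  | MLock 'v nat

record 'v lst =
  lock :: int
  lock_val :: 'v
  key3 :: int
  key3_val :: 'v
  key2 :: int
  key2_val :: 'v
  prev_key2 :: int
  key1 :: int
  key1_val :: 'v
  prev_key1 :: int
  view :: nat
  hreq :: "nat \<Rightarrow> nat"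
  habort :: "nat \<Rightarrow> nat"
  done_sent :: bool
  done_from :: "'v \<Rightarrow> nat set"
  decided :: "'v option"              (* Some val = decided val and terminated *)
  done_by_lock :: "'v option"         (* ghost: Some val iff done val was sent by the final handler *)
  (* fresh per-view state *)
  timer_fired :: bool                 (* abort for the current view already sent by the timer *)
  suggest_sent :: bool
  pending :: "'v msg set"             (* messages to be sent via send-upon-join *)
  joined :: "(nat \<times> 'v msg) set"   (* (j, m): m already sent to j via send-upon-join *)
  sugg_from :: "nat set"
  key2_proofs :: "nat \<Rightarrow> (int \<times> 'v \<times> int) option"
  suggestions :: "nat \<Rightarrow> (int \<times> 'v) option"
  sugg_wait :: "nat \<Rightarrow> (int \<times> 'v) option"  (* suggestions waiting for key2 proofs *)
  proposed :: bool
  proof_from :: "nat set"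
  proofs :: "nat \<Rightarrow> (int \<times> 'v \<times> int) option"
  propose_recv :: bool
  echo_wait :: "'v option"            (* proposal waiting for f+1 proofs before echoing *)
  echo_from :: "'v \<Rightarrow> nat set"
  key1_from :: "'v \<Rightarrow> nat set"
  key2_from :: "'v \<Rightarrow> nat set"
  key3_from :: "'v \<Rightarrow> nat set"
  lock_from :: "'v \<Rightarrow> nat set"

record 'v gst =
  loc :: "nat \<Rightarrow> 'v lst"
  net :: "(nat \<times> nat \<times> 'v msg) multiset"   (* in-flight messages (sender, receiver, msg) *)

definition primary :: "nat \<Rightarrow> nat \<Rightarrow> nat" where
  "primary n v = v mod n + 1"

definition to_all :: "nat \<Rightarrow> 'v msg \<Rightarrow> (nat \<times> 'v msg) list" where
  "to_all n m = map (\<lambda>k. (k, m)) [1..<Suc n]"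

definition kth_largest :: "nat \<Rightarrow> (nat \<Rightarrow> nat) \<Rightarrow> nat \<Rightarrow> nat" where
  "kth_largest n h k = rev (sort (map h [1..<Suc n])) ! (k - 1)"

definition crosses :: "nat \<Rightarrow> nat set \<Rightarrow> nat set \<Rightarrow> bool" where
  "crosses t A B \<longleftrightarrow> card A < t \<and> t \<le> card B"

definition enter_view :: "nat \<Rightarrow> nat \<Rightarrow> 'v lst \<Rightarrow> 'v lst \<times> (nat \<times> 'v msg) list" where
  "enter_view n v s =
    (s\<lparr>view := v, timer_fired := False, suggest_sent := False,
       pending := {MProof (key1 s) (key1_val s) (prev_key1 s) v}, joined := {},
       sugg_from := {}, key2_proofs := (\<lambda>_. None), suggestions := (\<lambda>_. None),
       sugg_wait := (\<lambda>_. None), proposed := False, proof_from := {}, proofs := (\<lambda>_. None),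
       propose_recv := False, echo_wait := None, echo_from := (\<lambda>_. {}),
       key1_from := (\<lambda>_. {}), key2_from := (\<lambda>_. {}), key3_from := (\<lambda>_. {}),
       lock_from := (\<lambda>_. {})\<rparr>,
     to_all n (MRequest v))"

definition base_state :: "('p \<Rightarrow> 'v) \<Rightarrow> 'p \<Rightarrow> 'v lst" where
  "base_state x i =
    \<lparr>lock = 0, lock_val = x i, key3 = 0, key3_val = x i, key2 = 0, key2_val = x i,
     prev_key2 = -1, key1 = 0, key1_val = x i, prev_key1 = -1, view = 0,
     hreq = (\<lambda>_. 0), habort = (\<lambda>_. 0), done_sent = False, done_from = (\<lambda>_. {}),
     decided = None, done_by_lock = None,
     timer_fired = False, suggest_sent = False, pending = {}, joined = {},
     sugg_from = {}, key2_proofs = (\<lambda>_. None), suggestions = (\<lambda>_. None),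
     sugg_wait = (\<lambda>_. None), proposed = False, proof_from = {}, proofs = (\<lambda>_. None),
     propose_recv = False, echo_wait = None, echo_from = (\<lambda>_. {}),
     key1_from = (\<lambda>_. {}), key2_from = (\<lambda>_. {}), key3_from = (\<lambda>_. {}),
     lock_from = (\<lambda>_. {})\<rparr>"

definition init_local :: "nat \<Rightarrow> (nat \<Rightarrow> 'v) \<Rightarrow> nat \<Rightarrow> 'v lst" where
  "init_local n x i = fst (enter_view n 1 (base_state x i))"

definition init_gst :: "nat \<Rightarrow> nat set \<Rightarrow> (nat \<Rightarrow> 'v) \<Rightarrow> 'v gst" where
  "init_gst n F x =
    \<lparr>loc = init_local n x,
     net = mset [(i, k, MRequest 1). i \<leftarrow> [1..<Suc n], i \<notin> F, k \<leftarrow> [1..<Suc n]]\<rparr>"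

definition recv_done :: "nat \<Rightarrow> nat \<Rightarrow> nat \<Rightarrow> 'v \<Rightarrow> 'v lst \<Rightarrow> 'v lst \<times> (nat \<times> 'v msg) list" where
  "recv_done n f j val s =
    (let D = insert j (done_from s val);
         s1 = s\<lparr>done_from := (done_from s)(val := D)\<rparr>;
         r2 = (if crosses (f + 1) (done_from s val) D \<and> \<not> done_sent s1
               then (s1\<lparr>done_sent := True\<rparr>, to_all n (MDone val)) else (s1, []));
         s3 = (if crosses (n - f) (done_from s val) D then (fst r2)\<lparr>decided := Some val\<rparr> else fst r2)
     in (s3, snd r2))"

definition recv_abort :: "nat \<Rightarrow> nat \<Rightarrow> nat \<Rightarrow> nat \<Rightarrow> nat \<Rightarrow> 'v lst \<Rightarrow> 'v lst \<times> (nat \<times> 'v msg) list" where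
  "recv_abort n f i j v s =
    (if habort s j < v then
       (let H = (habort s)(j := v);
            u = kth_largest n H (f + 1);
            r1 = (if u > H i then (s\<lparr>habort := H(i := u)\<rparr>, to_all n (MAbort u))
                  else (s\<lparr>habort := H\<rparr>, []));
            w = kth_largest n (habort (fst r1)) (n - f)
        in if w \<ge> view (fst r1)
           then (let r2 = enter_view n (w + 1) (fst r1) in (fst r2, snd r1 @ snd r2))
           else r1)
     else (s, []))"

definition recv_suggest :: "nat \<Rightarrow> nat \<Rightarrow> nat \<Rightarrow> int \<Rightarrow> 'v \<Rightarrow> int \<Rightarrow> 'v \<Rightarrow> int \<Rightarrow> nat \<Rightarrow> 'v lst \<Rightarrow> 'v lst" where
  "recv_suggest n i j k3 v3 k2 v2 pk2 v s =
    (if v = view s \<and> i = primary n v \<and> j \<notin> sugg_from s then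
       (let s1 = s\<lparr>sugg_from := insert j (sugg_from s)\<rparr>;
            s2 = (if pk2 < k2 \<and> k2 < int v
                  then s1\<lparr>key2_proofs := (key2_proofs s1)(j := Some (k2, v2, pk2))\<rparr> else s1)
        in if k3 = 0 then s2\<lparr>suggestions := (suggestions s2)(j := Some (k3, v3))\<rparr>
           else if k3 < int v then s2\<lparr>sugg_wait := (sugg_wait s2)(j := Some (k3, v3))\<rparr>
           else s2)
     else s)"

definition recv_proof :: "nat \<Rightarrow> int \<Rightarrow> 'v \<Rightarrow> int \<Rightarrow> nat \<Rightarrow> 'v lst \<Rightarrow> 'v lst" where
  "recv_proof j k1 v1 pk1 v s =
    (if v = view s \<and> j \<notin> proof_from s then
       (let s1 = s\<lparr>proof_from := insert j (proof_from s)\<rparr>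
        in if int v > k1 \<and> k1 > pk1 then s1\<lparr>proofs := (proofs s1)(j := Some (k1, v1, pk1))\<rparr> else s1)
     else s)"

definition recv_propose :: "nat \<Rightarrow> nat \<Rightarrow> int \<Rightarrow> 'v \<Rightarrow> nat \<Rightarrow> 'v lst \<Rightarrow> 'v lst" where
  "recv_propose n j key val v s =
    (if v = view s \<and> j = primary n v \<and> \<not> propose_recv s then
       (let s1 = s\<lparr>propose_recv := True\<rparr>
        in if lock s1 = 0 \<or> val = lock_val s1 then s1\<lparr>pending := insert (MEcho val v) (pending s1)\<rparr>
           else if int v > key \<and> key \<ge> lock s1 then s1\<lparr>echo_wait := Some val\<rparr>
           else s1)
     else s)"

definition recv_echo :: "nat \<Rightarrow> nat \<Rightarrow> nat \<Rightarrow> 'v \<Rightarrow> nat \<Rightarrow> 'v lst \<Rightarrow> 'v lst" where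
  "recv_echo n f j val v s =
    (if v = view s then
       (let E = insert j (echo_from s val);
            s1 = s\<lparr>echo_from := (echo_from s)(val := E)\<rparr>
        in if crosses (n - f) (echo_from s val) E then
             s1\<lparr>pending := insert (MKey1 val v) (pending s1),
                prev_key1 := (if key1_val s1 \<noteq> val then key1 s1 else prev_key1 s1),
                key1_val := val, key1 := int v\<rparr>
           else s1)
     else s)"

definition recv_key1 :: "nat \<Rightarrow> nat \<Rightarrow> nat \<Rightarrow> 'v \<Rightarrow> nat \<Rightarrow> 'v lst \<Rightarrow> 'v lst" where
  "recv_key1 n f j val v s =
    (if v = view s then
       (let E = insert j (key1_from s val);
            s1 = s\<lparr>key1_from := (key1_from s)(val := E)\<rparr>
        in if crosses (n - f) (key1_from s val) E then
             s1\<lparr>pending := insert (MKey2 val v) (pending s1),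
                prev_key2 := (if key2_val s1 \<noteq> val then key2 s1 else prev_key2 s1),
                key2_val := val, key2 := int v\<rparr>
           else s1)
     else s)"

definition recv_key2 :: "nat \<Rightarrow> nat \<Rightarrow> nat \<Rightarrow> 'v \<Rightarrow> nat \<Rightarrow> 'v lst \<Rightarrow> 'v lst" where
  "recv_key2 n f j val v s =
    (if v = view s then
       (let E = insert j (key2_from s val);
            s1 = s\<lparr>key2_from := (key2_from s)(val := E)\<rparr>
        in if crosses (n - f) (key2_from s val) E then
             s1\<lparr>pending := insert (MKey3 val v) (pending s1), key3 := int v, key3_val := val\<rparr>
           else s1)
     else s)"

definition recv_key3 :: "nat \<Rightarrow> nat \<Rightarrow> nat \<Rightarrow> 'v \<Rightarrow> nat \<Rightarrow> 'v lst \<Rightarrow> 'v lst" where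
  "recv_key3 n f j val v s =
    (if v = view s then
       (let E = insert j (key3_from s val);
            s1 = s\<lparr>key3_from := (key3_from s)(val := E)\<rparr>
        in if crosses (n - f) (key3_from s val) E then
             s1\<lparr>pending := insert (MLock val v) (pending s1), lock := int v, lock_val := val\<rparr>
           else s1)
     else s)"

(* final handler *)
definition recv_lock :: "nat \<Rightarrow> nat \<Rightarrow> nat \<Rightarrow> 'v \<Rightarrow> nat \<Rightarrow> 'v lst \<Rightarrow> 'v lst \<times> (nat \<times> 'v msg) list" where
  "recv_lock n f j val v s =
    (if v = view s then
       (let E = insert j (lock_from s val);
            s1 = s\<lparr>lock_from := (lock_from s)(val := E)\<rparr>
        in if crosses (n - f) (lock_from s val) E \<and> \<not> done_sent s1 then
             (s1\<lparr>done_sent := True, done_by_lock := Some val\<rparr>, to_all n (MDone val))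
           else (s1, []))
     else (s, []))"

definition deliver :: "nat \<Rightarrow> nat \<Rightarrow> nat \<Rightarrow> nat \<Rightarrow> 'v msg \<Rightarrow> 'v lst \<Rightarrow> 'v lst \<times> (nat \<times> 'v msg) list" where
  "deliver n f i j m s =
    (case m of
       MRequest v \<Rightarrow> (s\<lparr>hreq := (hreq s)(j := max (hreq s j) v)\<rparr>, [])
     | MDone val \<Rightarrow> recv_done n f j val s
     | MAbort v \<Rightarrow> recv_abort n f i j v s
     | MSuggest k3 v3 k2 v2 pk2 v \<Rightarrow> (recv_suggest n i j k3 v3 k2 v2 pk2 v s, [])
     | MProof k1 v1 pk1 v \<Rightarrow> (recv_proof j k1 v1 pk1 v s, [])
     | MPropose key val v \<Rightarrow> (recv_propose n j key val v s, [])
     | MEcho val v \<Rightarrow> (recv_echo n f j val v s, [])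
     | MKey1 val v \<Rightarrow> (recv_key1 n f j val v s, [])
     | MKey2 val v \<Rightarrow> (recv_key2 n f j val v s, [])
     | MKey3 val v \<Rightarrow> (recv_key3 n f j val v s, [])
     | MLock val v \<Rightarrow> recv_lock n f j val v s)"

definition internal_step :: "nat \<Rightarrow> nat \<Rightarrow> nat \<Rightarrow> 'v lst \<Rightarrow> 'v lst \<Rightarrow> (nat \<times> 'v msg) list \<Rightarrow> bool" where
  "internal_step n f i s s' outs \<longleftrightarrow>
     \<comment> \<open>send-upon-join\<close>
     (\<exists>m j. m \<in> pending s \<and> j \<in> {1..n} \<and> hreq s j = view s \<and> (j, m) \<notin> joined s \<and>
            s' = s\<lparr>joined := insert (j, m) (joined s)\<rparr> \<and> outs = [(j, m)])
   \<or> \<comment> \<open>suggest to the primary once it joined the view\<close>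
     (\<not> suggest_sent s \<and> hreq s (primary n (view s)) = view s \<and>
      s' = s\<lparr>suggest_sent := True\<rparr> \<and>
      outs = [(primary n (view s),
               MSuggest (key3 s) (key3_val s) (key2 s) (key2_val s) (prev_key2 s) (view s))])
   \<or> \<comment> \<open>primary: accept a waiting suggestion once f+1 key2 proofs support it\<close>
     (\<exists>j k3 v3. sugg_wait s j = Some (k3, v3) \<and>
        f + 1 \<le> card {l. \<exists>k w pk. key2_proofs s l = Some (k, w, pk) \<and> (k3 \<le> pk \<or> (k3 \<le> k \<and> w = v3))} \<and>
        s' = s\<lparr>suggestions := (suggestions s)(j := Some (k3, v3)), sugg_wait := (sugg_wait s)(j := None)\<rparr> \<and>
        outs = [])
   \<or> \<comment> \<open>primary: propose a suggestion with maximal key once n-f suggestions are accepted\<close>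
     (\<exists>j k w. i = primary n (view s) \<and> \<not> proposed s \<and>
        n - f \<le> card {l. suggestions s l \<noteq> None} \<and>
        suggestions s j = Some (k, w) \<and> (\<forall>l k' w'. suggestions s l = Some (k', w') \<longrightarrow> k' \<le> k) \<and>
        s' = s\<lparr>proposed := True, pending := insert (MPropose k w (view s)) (pending s)\<rparr> \<and> outs = [])
   \<or> \<comment> \<open>echo a waiting proposal once f+1 proofs allow it\<close>
     (\<exists>val. echo_wait s = Some val \<and>
        f + 1 \<le> card {l. \<exists>k w pk. proofs s l = Some (k, w, pk) \<and>
                            (lock s \<le> pk \<or> (lock s \<le> k \<and> w \<noteq> lock_val s))} \<and>
        s' = s\<lparr>echo_wait := None, pending := insert (MEcho val (view s)) (pending s)\<rparr> \<and> outs = [])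
   \<or> \<comment> \<open>timer of the current view expires (may happen at any time: asynchrony)\<close>
     (\<not> timer_fired s \<and> s' = s\<lparr>timer_fired := True\<rparr> \<and> outs = to_all n (MAbort (view s)))"

inductive reachable :: "nat \<Rightarrow> nat \<Rightarrow> nat set \<Rightarrow> (nat \<Rightarrow> 'v) \<Rightarrow> 'v gst \<Rightarrow> bool"
  for n f :: nat and F :: "nat set" and x :: "nat \<Rightarrow> 'v" where
  init: "reachable n f F x (init_gst n F x)"
| deliver_step:
    "\<lbrakk> reachable n f F x s; (j, i, m) \<in># net s; i \<in> {1..n}; i \<notin> F;
       decided (loc s i) = None; deliver n f i j m (loc s i) = (s', outs) \<rbrakk>
     \<Longrightarrow> reachable n f F x
           \<lparr>loc = (loc s)(i := s'),
            net = net s - {#(j, i, m)#} + mset (map (\<lambda>(k, m'). (i, k, m')) outs)\<rparr>"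
| internal:
    "\<lbrakk> reachable n f F x s; i \<in> {1..n}; i \<notin> F; decided (loc s i) = None;
       internal_step n f i (loc s i) s' outs \<rbrakk>
     \<Longrightarrow> reachable n f F x
           \<lparr>loc = (loc s)(i := s'), net = net s + mset (map (\<lambda>(k, m'). (i, k, m')) outs)\<rparr>"
| byzantine:
    "\<lbrakk> reachable n f F x s; j \<in> F \<rbrakk>
     \<Longrightarrow> reachable n f F x (s\<lparr>net := net s + {#(j, k, m)#}\<rparr>)"

end

theory Submission
  imports Defs
begin

text \<open>
  Executions are extended by a ghost history: the echoes sent by correct parties, each stamped
  with a global time, and the locks of correct parties. A value is certified in a view when a
  quorum echoed it there. Everything a correct party stores or sends is justified by this history,
  and the history itself satisfies an invariant: a correct party echoes at most once per view, and
  each echo agrees with the party's lock at that moment unless a valid proof from a view between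
  the lock and the echo releases it.

  From this invariant a double induction, on views and, within a view, on echo times, shows that
  once f+1 correct parties have locked a in view v, every value certified in a view u \<ge> v is a.
  A done message sent by the final handler is backed by n-f lock messages of one view, at least
  f+1 of them from correct parties; given two such quorums, the later one certifies its value in
  its view, hence both values coincide.
\<close>

lemma card_Int_lower_bound:
  assumes "finite U" "A \<subseteq> U" "B \<subseteq> U"
  shows "card A + card B \<le> card U + card (A \<inter> B)"
proof -
  have "finite A" "finite B" using assms finite_subset by auto
  then have "card A + card B = card (A \<union> B) + card (A \<inter> B)" by (rule card_Un_Int)
  moreover have "card (A \<union> B) \<le> card U" using assms by (simp add: card_mono)
  ultimately show ?thesis by linarith
qed

(* (p, a, u, t) \<in> E: correct party p echoed a in view u at ghost time t;
   (p, a, v) \<in> L: correct party p locked a in view v *)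
type_synonym 'v echo_log = "(nat \<times> 'v \<times> nat \<times> nat) set"
type_synonym 'v lock_log = "(nat \<times> 'v \<times> nat) set"

locale it_hs =
  fixes n f :: nat and F :: "nat set"
  assumes resilience: "3 * f < n" and faulty_parties: "F \<subseteq> {1..n}" and few_faulty: "card F \<le> f"
begin

section \<open>Quorums\<close>

lemma exists_correct:
  assumes "card F < card A"
  obtains j where "j \<in> A" "j \<notin> F"
proof -
  have "finite F" using faulty_parties finite_subset by blast
  then have "\<not> A \<subseteq> F" using assms by (meson card_mono leD)
  then show thesis using that by blast
qed

definition quorum :: "nat set \<Rightarrow> bool" where
  "quorum S \<longleftrightarrow> S \<subseteq> {1..n} \<and> n - f \<le> card S"

lemma quorum_has_correct:
  assumes "quorum S"
  obtains j where "j \<in> S" "j \<notin> F"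
proof (rule exists_correct)
  show "card F < card S" using assms few_faulty resilience unfolding quorum_def by linarith
qed (use that in blast)

lemma quorums_share_correct:
  assumes "quorum A" "quorum B"
  obtains j where "j \<in> A" "j \<in> B" "j \<notin> F"
proof -
  have "card A + card B \<le> n + card (A \<inter> B)"
    using card_Int_lower_bound[of "{1..n}" A B] assms unfolding quorum_def by simp
  then have "card F < card (A \<inter> B)" using assms few_faulty resilience unfolding quorum_def by linarith
  then show thesis using exists_correct that by blast
qed

lemma quorum_meets:
  assumes "quorum A" "B \<subseteq> {1..n}" "f < card B"
  obtains j where "j \<in> A" "j \<in> B"
proof -
  have "card A + card B \<le> n + card (A \<inter> B)"
    using card_Int_lower_bound[of "{1..n}" A B] assms unfolding quorum_def by simp
  then have "A \<inter> B \<noteq> {}" using assms resilience unfolding quorum_def by auto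
  then show thesis using that by blast
qed

section \<open>Ghost history and safety\<close>

definition certified :: "'v echo_log \<Rightarrow> 'v \<Rightarrow> nat \<Rightarrow> bool" where
  "certified E a v \<longleftrightarrow>
     (\<exists>S. quorum S \<and> (\<forall>j \<in> S - F. \<exists>t. (j, a, v, t) \<in> E))"

definition certified_before :: "'v echo_log \<Rightarrow> 'v \<Rightarrow> nat \<Rightarrow> nat \<Rightarrow> bool" where
  "certified_before E a v T \<longleftrightarrow>
     (\<exists>S. quorum S \<and> (\<forall>j \<in> S - F. \<exists>t < T. (j, a, v, t) \<in> E))"

(* Keys are integers starting at 0 (-1 for prev_key1); only views \<ge> 1 carry a certificate. *)
definition valid_proof :: "'v echo_log \<Rightarrow> int \<Rightarrow> 'v \<Rightarrow> int \<Rightarrow> bool" where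
  "valid_proof E k w pk \<longleftrightarrow>
     (1 \<le> k \<longrightarrow> certified E w (nat k)) \<and> (1 \<le> pk \<longrightarrow> (\<exists>b. b \<noteq> w \<and> certified E b (nat pk)))"

definition proof_unlocks :: "'v echo_log \<Rightarrow> int \<Rightarrow> 'v \<Rightarrow> nat \<Rightarrow> bool" where
  "proof_unlocks E lk lv u \<longleftrightarrow>
     (\<exists>k w pk. pk < k \<and> k < int u \<and> valid_proof E k w pk \<and> (lk \<le> pk \<or> lk \<le> k \<and> w \<noteq> lv))"

(* (lk, lv) is the lock of p at time t, when it echoed b in view u. *)
definition echo_justified :: "'v echo_log \<Rightarrow> 'v lock_log \<Rightarrow> nat \<Rightarrow> 'v \<Rightarrow> nat \<Rightarrow> nat \<Rightarrow> bool" where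
  "echo_justified E L p b u t \<longleftrightarrow>
     (\<exists>lk lv. 0 \<le> lk \<and> lk \<le> int u \<and> (1 \<le> lk \<longrightarrow> certified_before E lv (nat lk) t) \<and>
        (\<forall>a v. (p, a, v) \<in> L \<longrightarrow> v < u \<longrightarrow> int v \<le> lk) \<and>
        (lk = 0 \<or> b = lv \<or> proof_unlocks E lk lv u))"

definition ghost_inv :: "'v echo_log \<Rightarrow> 'v lock_log \<Rightarrow> nat \<Rightarrow> bool" where
  "ghost_inv E L clk \<longleftrightarrow>
     (\<forall>p a b u t t'. (p, a, u, t) \<in> E \<longrightarrow> (p, b, u, t') \<in> E \<longrightarrow> a = b) \<and>
     (\<forall>p b u t. (p, b, u, t) \<in> E \<longrightarrow> echo_justified E L p b u t \<and> t < clk) \<and>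
     (\<forall>p a v. (p, a, v) \<in> L \<longrightarrow> certified E a v \<and> 1 \<le> v)"

lemma ghost_invD:
  assumes "ghost_inv E L clk"
  shows ghost_inv_echo_unique: "(p, a, u, t) \<in> E \<Longrightarrow> (p, b, u, t') \<in> E \<Longrightarrow> a = b"
    and ghost_inv_echo_justified: "(p, b, u, t) \<in> E \<Longrightarrow> echo_justified E L p b u t"
    and ghost_inv_echo_time: "(p, b, u, t) \<in> E \<Longrightarrow> t < clk"
    and ghost_inv_lock_certified: "(p, a, v) \<in> L \<Longrightarrow> certified E a v"
    and ghost_inv_lock_view: "(p, a, v) \<in> L \<Longrightarrow> 1 \<le> v"
  using assms unfolding ghost_inv_def by blast+

lemma certified_unique:
  assumes "ghost_inv E L clk" "certified E a v" "certified E b v"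
  shows "a = b"
proof -
  obtain S S' where S: "quorum S" "\<forall>j \<in> S - F. \<exists>t. (j, a, v, t) \<in> E"
    and S': "quorum S'" "\<forall>j \<in> S' - F. \<exists>t. (j, b, v, t) \<in> E"
    using assms(2,3) unfolding certified_def by blast
  obtain j where "j \<in> S" "j \<in> S'" "j \<notin> F" using quorums_share_correct[OF S(1) S'(1)] .
  then show ?thesis using S(2) S'(2) ghost_inv_echo_unique[OF assms(1)] by blast
qed

lemma certified_before_imp_certified: "certified_before E a v T \<Longrightarrow> certified E a v"
  unfolding certified_before_def certified_def by blast

lemma certified_imp_certified_before:
  "ghost_inv E L clk \<Longrightarrow> certified E a v \<Longrightarrow> certified_before E a v clk"
  unfolding certified_def certified_before_def by (meson ghost_inv_echo_time)

lemma echo_after_lock: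
  assumes gi: "ghost_inv E L clk"
    and L0: "L0 \<subseteq> {1..n}" "L0 \<inter> F = {}" "f < card L0" "\<forall>l \<in> L0. (l, a, v) \<in> L"
    and below: "\<And>u' c. u' < u \<Longrightarrow> v \<le> u' \<Longrightarrow> certified E c u' \<Longrightarrow> c = a"
    and "v < u"
  shows "l \<in> L0 \<Longrightarrow> (l, b, u, t) \<in> E \<Longrightarrow> b = a"
proof (induction t arbitrary: l b rule: less_induct)
  case (less t)
  obtain lk lv where lk: "0 \<le> lk" "lk \<le> int u" "1 \<le> lk \<longrightarrow> certified_before E lv (nat lk) t"
    and older_locks: "\<forall>a v. (l, a, v) \<in> L \<longrightarrow> v < u \<longrightarrow> int v \<le> lk"
    and reason: "lk = 0 \<or> b = lv \<or> proof_unlocks E lk lv u"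
    using ghost_inv_echo_justified[OF gi less.prems(2)] unfolding echo_justified_def by blast
  have "int v \<le> lk" using older_locks L0(4) less.prems(1) \<open>v < u\<close> by blast
  moreover have "1 \<le> v" using ghost_inv_lock_view[OF gi] L0(4) less.prems(1) by blast
  ultimately have lv_cert: "certified_before E lv (nat lk) t" using lk(3) by simp
  have below': "c = a" if "certified E c (nat k)" "int v \<le> k" "k < int u" for c k
  proof -
    have "v \<le> nat k" "nat k < u" using that(2,3) by auto
    then show ?thesis using below that(1) by blast
  qed
  have "lv = a"
  proof (cases "lk < int u")
    case True
    then show ?thesis using below' certified_before_imp_certified[OF lv_cert] \<open>int v \<le> lk\<close> by blast
  next
    case False
    then have "nat lk = u" using lk(2) by simp
    \<comment> \<open>l locked in view u itself: the certificate consists of earlier echoes of view u\<close>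
    then obtain S where S: "quorum S" "\<forall>j \<in> S - F. \<exists>t' < t. (j, lv, u, t') \<in> E"
      using lv_cert unfolding certified_before_def by auto
    obtain l' where "l' \<in> S" "l' \<in> L0" using quorum_meets[OF S(1) L0(1,3)] .
    then show ?thesis using S(2) L0(2) less.IH by blast
  qed
  show "b = a"
    using reason
  proof (elim disjE)
    assume "lk = 0"
    then show ?thesis using \<open>int v \<le> lk\<close> \<open>1 \<le> v\<close> by simp
  next
    assume "b = lv"
    then show ?thesis using \<open>lv = a\<close> by simp
  next
    assume "proof_unlocks E lk lv u"
    then obtain k w pk where k: "pk < k" "k < int u" "valid_proof E k w pk" "lk \<le> pk \<or> lk \<le> k \<and> w \<noteq> lv"
      unfolding proof_unlocks_def by blast
    have "1 \<le> k" "int v \<le> k" using k(1,4) \<open>int v \<le> lk\<close> \<open>1 \<le> v\<close> by auto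
    then have "w = a" using below' k(2,3) unfolding valid_proof_def by blast
    moreover have False if "lk \<le> pk"
    proof -
      have "1 \<le> pk" "int v \<le> pk" "pk < int u" using that k(1,2) \<open>int v \<le> lk\<close> \<open>1 \<le> v\<close> by auto
      then obtain b' where "b' \<noteq> w" "certified E b' (nat pk)"
        using k(3) unfolding valid_proof_def by blast
      then show False using below' \<open>w = a\<close> \<open>int v \<le> pk\<close> \<open>pk < int u\<close> by blast
    qed
    ultimately show ?thesis using k(4) \<open>lv = a\<close> by blast
  qed
qed

theorem certified_after_lock:
  assumes gi: "ghost_inv E L clk"
    and L0: "L0 \<subseteq> {1..n}" "L0 \<inter> F = {}" "f < card L0" "\<forall>l \<in> L0. (l, a, v) \<in> L"
  shows "v \<le> u \<Longrightarrow> certified E c u \<Longrightarrow> c = a"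
proof (induction u arbitrary: c rule: less_induct)
  case (less u)
  obtain l where "l \<in> L0" using L0(3) by fastforce
  then have a_cert: "certified E a v" using L0(4) ghost_inv_lock_certified[OF gi] by blast
  show ?case
  proof (cases "u = v")
    case True
    then show ?thesis using certified_unique[OF gi a_cert] less.prems(2) by blast
  next
    case False
    obtain S where S: "quorum S" "\<forall>j \<in> S - F. \<exists>t. (j, c, u, t) \<in> E"
      using less.prems(2) unfolding certified_def by blast
    obtain l where "l \<in> S" "l \<in> L0" using quorum_meets[OF S(1) L0(1,3)] .
    then obtain t where "(l, c, u, t) \<in> E" using S(2) L0(2) by blast
    moreover have "v < u" using False less.prems(1) by simp
    moreover have "\<And>u' c. u' < u \<Longrightarrow> v \<le> u' \<Longrightarrow> certified E c u' \<Longrightarrow> c = a"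
      using less.IH by blast
    ultimately show ?thesis using echo_after_lock[OF gi L0] \<open>l \<in> L0\<close> by blast
  qed
qed

definition lock_quorum :: "'v lock_log \<Rightarrow> 'v \<Rightarrow> nat \<Rightarrow> bool" where
  "lock_quorum L a v \<longleftrightarrow> (\<exists>S. quorum S \<and> (\<forall>j \<in> S - F. (j, a, v) \<in> L))"

lemma lock_quorums_agree:
  assumes gi: "ghost_inv E L clk" and a: "lock_quorum L a v" and b: "lock_quorum L b w" and "v \<le> w"
  shows "a = b"
proof -
  obtain S where S: "quorum S" "\<forall>j \<in> S - F. (j, a, v) \<in> L" using a unfolding lock_quorum_def by blast
  obtain S' where S': "quorum S'" "\<forall>j \<in> S' - F. (j, b, w) \<in> L" using b unfolding lock_quorum_def by blast
  obtain j where "j \<in> S'" "j \<notin> F" using quorum_has_correct[OF S'(1)] .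
  then have "certified E b w" using S'(2) ghost_inv_lock_certified[OF gi] by blast
  have "card S - card F \<le> card (S - F)"
    using diff_card_le_card_Diff faulty_parties finite_subset by blast
  then have "f < card (S - F)" using S(1) few_faulty resilience unfolding quorum_def by linarith
  moreover have "S - F \<subseteq> {1..n}" using S(1) unfolding quorum_def by blast
  ultimately show ?thesis
    using certified_after_lock[OF gi _ _ _ S(2) \<open>v \<le> w\<close> \<open>certified E b w\<close>] by blast
qed

section \<open>Invariants of correct parties\<close>

definition msg_valid :: "'v echo_log \<Rightarrow> 'v lock_log \<Rightarrow> nat \<Rightarrow> 'v msg \<Rightarrow> bool" where
  "msg_valid E L j m = (case m of
      MEcho a v \<Rightarrow> (\<exists>t. (j, a, v, t) \<in> E)
    | MKey1 a v \<Rightarrow> certified E a v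
    | MKey2 a v \<Rightarrow> certified E a v
    | MKey3 a v \<Rightarrow> certified E a v
    | MLock a v \<Rightarrow> (j, a, v) \<in> L
    | MProof k w pk v \<Rightarrow> valid_proof E k w pk
    | _ \<Rightarrow> True)"

(* T a: senders of the messages with value a received in the current view;
   P j a: what sending such a message commits a correct sender j to. *)
definition tally_ok :: "(nat \<Rightarrow> 'v \<Rightarrow> bool) \<Rightarrow> ('v \<Rightarrow> nat set) \<Rightarrow> bool" where
  "tally_ok P T \<longleftrightarrow> (\<forall>a. T a \<subseteq> {1..n} \<and> (\<forall>j \<in> T a - F. P j a))"

definition proofs_ok :: "'v echo_log \<Rightarrow> nat \<Rightarrow> (nat \<Rightarrow> (int \<times> 'v \<times> int) option) \<Rightarrow> bool" where
  "proofs_ok E v P \<longleftrightarrow>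
     (\<forall>j k w pk. P j = Some (k, w, pk) \<longrightarrow> pk < k \<and> k < int v \<and> (j \<notin> F \<longrightarrow> valid_proof E k w pk))"

definition state_inv :: "nat \<Rightarrow> 'v lst \<Rightarrow> 'v echo_log \<Rightarrow> 'v lock_log \<Rightarrow> bool" where
  "state_inv p st E L \<longleftrightarrow>
     1 \<le> view st \<and>
     tally_ok (\<lambda>j a. \<exists>t. (j, a, view st, t) \<in> E) (echo_from st) \<and>
     tally_ok (\<lambda>_ a. certified E a (view st)) (key1_from st) \<and>
     tally_ok (\<lambda>_ a. certified E a (view st)) (key2_from st) \<and>
     tally_ok (\<lambda>_ a. certified E a (view st)) (key3_from st) \<and>
     tally_ok (\<lambda>j a. (j, a, view st) \<in> L) (lock_from st) \<and>
     (\<forall>m \<in> pending st. msg_valid E L p m) \<and>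
     proofs_ok E (view st) (proofs st) \<and>
     0 \<le> key1 st \<and> key1 st \<le> int (view st) \<and> prev_key1 st < key1 st \<and>
     valid_proof E (key1 st) (key1_val st) (prev_key1 st) \<and>
     0 \<le> lock st \<and> lock st \<le> int (view st) \<and>
     (1 \<le> lock st \<longrightarrow> certified E (lock_val st) (nat (lock st))) \<and>
     (\<forall>a. done_by_lock st = Some a \<longrightarrow> (\<exists>v. lock_quorum L a v))"

definition history_inv :: "nat \<Rightarrow> 'v lst \<Rightarrow> 'v echo_log \<Rightarrow> 'v lock_log \<Rightarrow> bool" where
  "history_inv p st E L \<longleftrightarrow>
     (\<forall>a v. (p, a, v) \<in> L \<longrightarrow> int v \<le> lock st \<and> v \<le> view st) \<and>
     (\<forall>a u t. (p, a, u, t) \<in> E \<longrightarrow> u \<le> view st) \<and>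
     (\<not> propose_recv st \<longrightarrow> (\<forall>a t. (p, a, view st, t) \<notin> E)) \<and>
     (echo_wait st \<noteq> None \<longrightarrow> propose_recv st \<and> (\<forall>a t. (p, a, view st, t) \<notin> E))"

definition local_inv :: "nat \<Rightarrow> 'v lst \<Rightarrow> 'v echo_log \<Rightarrow> 'v lock_log \<Rightarrow> bool" where
  "local_inv p st E L \<longleftrightarrow> state_inv p st E L \<and> history_inv p st E L"

lemma certified_mono: "certified E a v \<Longrightarrow> E \<subseteq> E' \<Longrightarrow> certified E' a v"
  unfolding certified_def by blast

lemma certified_before_mono: "certified_before E a v T \<Longrightarrow> E \<subseteq> E' \<Longrightarrow> certified_before E' a v T"
  unfolding certified_before_def by blast

lemma valid_proof_mono:
  assumes "valid_proof E k w pk" "E \<subseteq> E'"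
  shows "valid_proof E' k w pk"
  using assms(1) certified_mono[OF _ assms(2)] unfolding valid_proof_def by blast

lemma proof_unlocks_mono:
  assumes "proof_unlocks E lk lv u" "E \<subseteq> E'"
  shows "proof_unlocks E' lk lv u"
  using assms(1) valid_proof_mono[OF _ assms(2)] unfolding proof_unlocks_def by blast

lemma lock_quorum_mono: "lock_quorum L a v \<Longrightarrow> L \<subseteq> L' \<Longrightarrow> lock_quorum L' a v"
  unfolding lock_quorum_def by blast

lemma msg_valid_mono:
  assumes "msg_valid E L j m" "E \<subseteq> E'" "L \<subseteq> L'"
  shows "msg_valid E' L' j m"
  using assms certified_mono[OF _ assms(2)] valid_proof_mono[OF _ assms(2)] unfolding msg_valid_def
  by (cases m) auto

lemma tally_ok_mono: "tally_ok P T \<Longrightarrow> (\<And>j a. P j a \<Longrightarrow> Q j a) \<Longrightarrow> tally_ok Q T"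
  unfolding tally_ok_def by blast

lemma proofs_ok_mono:
  assumes "proofs_ok E v P" "E \<subseteq> E'"
  shows "proofs_ok E' v P"
  unfolding proofs_ok_def
proof (intro allI impI)
  fix j k w pk assume "P j = Some (k, w, pk)"
  then show "pk < k \<and> k < int v \<and> (j \<notin> F \<longrightarrow> valid_proof E' k w pk)"
    using assms(1)[unfolded proofs_ok_def] valid_proof_mono[OF _ assms(2)] by simp
qed

lemma state_inv_mono:
  assumes "state_inv p st E L" "E \<subseteq> E'" "L \<subseteq> L'"
  shows "state_inv p st E' L'"
proof -
  have "tally_ok (\<lambda>j a. \<exists>t. (j, a, view st, t) \<in> E') (echo_from st)"
    by (rule tally_ok_mono[of "\<lambda>j a. \<exists>t. (j, a, view st, t) \<in> E"]) (use assms in \<open>auto simp: state_inv_def\<close>)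
  moreover have "tally_ok (\<lambda>j a. (j, a, view st) \<in> L') (lock_from st)"
    by (rule tally_ok_mono[of "\<lambda>j a. (j, a, view st) \<in> L"]) (use assms in \<open>auto simp: state_inv_def\<close>)
  moreover have "tally_ok (\<lambda>_ a. certified E' a (view st)) T"
    if "tally_ok (\<lambda>_ a. certified E a (view st)) T" for T
    by (rule tally_ok_mono[OF that]) (rule certified_mono[OF _ assms(2)])
  moreover have "\<exists>v. lock_quorum L' a v" if "\<exists>v. lock_quorum L a v" for a
    using that lock_quorum_mono[OF _ assms(3)] by blast
  ultimately show ?thesis
    using assms(1) unfolding state_inv_def
    by (auto intro: msg_valid_mono[OF _ assms(2,3)] proofs_ok_mono[OF _ assms(2)]
        valid_proof_mono[OF _ assms(2)] certified_mono[OF _ assms(2)] lock_quorum_mono[OF _ assms(3)])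
qed

lemma history_inv_mono:
  assumes "history_inv p st E L" "E \<subseteq> E'" "L \<subseteq> L'"
    and "\<forall>e \<in> E' - E. fst e \<noteq> p" "\<forall>e \<in> L' - L. fst e \<noteq> p"
  shows "history_inv p st E' L'"
proof -
  have "(p, a, v) \<in> L' \<longleftrightarrow> (p, a, v) \<in> L" for a v using assms(3,5) by force
  moreover have "(p, a, u, t) \<in> E' \<longleftrightarrow> (p, a, u, t) \<in> E" for a u t using assms(2,4) by force
  ultimately show ?thesis using assms(1) unfolding history_inv_def by simp
qed

lemma echo_justified_mono:
  assumes "echo_justified E L p b u t" "E \<subseteq> E'"
    and new_locks: "\<And>a v. (p, a, v) \<in> L' \<Longrightarrow> (p, a, v) \<notin> L \<Longrightarrow> u \<le> v"
  shows "echo_justified E' L' p b u t"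
proof -
  obtain lk lv where "0 \<le> lk" "lk \<le> int u" "1 \<le> lk \<longrightarrow> certified_before E lv (nat lk) t"
    and older: "\<forall>a v. (p, a, v) \<in> L \<longrightarrow> v < u \<longrightarrow> int v \<le> lk"
    and "lk = 0 \<or> b = lv \<or> proof_unlocks E lk lv u"
    using assms(1) unfolding echo_justified_def by blast
  moreover have "\<forall>a v. (p, a, v) \<in> L' \<longrightarrow> v < u \<longrightarrow> int v \<le> lk"
    using older new_locks leD by blast
  ultimately show ?thesis
    unfolding echo_justified_def
    using certified_before_mono[OF _ assms(2)] proof_unlocks_mono[OF _ assms(2)] by blast
qed

lemma ghost_inv_add_echo:
  assumes gi: "ghost_inv E L clk" and inv: "local_inv i st E L"
    and fresh: "\<forall>a t. (i, a, view st, t) \<notin> E"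
    and reason: "lock st = 0 \<or> b = lock_val st \<or> proof_unlocks E (lock st) (lock_val st) (view st)"
  shows "ghost_inv (insert (i, b, view st, clk) E) L (Suc clk)"
proof -
  let ?E' = "insert (i, b, view st, clk) E"
  have "echo_justified E L i b (view st) clk"
    unfolding echo_justified_def
  proof (intro exI conjI)
    show "0 \<le> lock st" "lock st \<le> int (view st)"
      using inv unfolding local_inv_def state_inv_def by simp_all
    show "1 \<le> lock st \<longrightarrow> certified_before E (lock_val st) (nat (lock st)) clk"
      using inv certified_imp_certified_before[OF gi] unfolding local_inv_def state_inv_def by simp
    show "\<forall>a v. (i, a, v) \<in> L \<longrightarrow> v < view st \<longrightarrow> int v \<le> lock st"
      using inv unfolding local_inv_def history_inv_def by simp
  qed (fact reason)
  then have "echo_justified ?E' L i b (view st) clk" by (rule echo_justified_mono) auto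
  moreover have "echo_justified ?E' L p c u t" if "(p, c, u, t) \<in> E" for p c u t
    using ghost_inv_echo_justified[OF gi that] by (rule echo_justified_mono) auto
  moreover have "(p, a, u, t) \<in> ?E' \<Longrightarrow> (p, c, u, t') \<in> ?E' \<Longrightarrow> a = c" for p a c u t t'
    using fresh ghost_inv_echo_unique[OF gi] by auto
  moreover have "certified ?E' a v" if "(p, a, v) \<in> L" for p a v
    by (rule certified_mono[OF ghost_inv_lock_certified[OF gi that]]) auto
  ultimately show ?thesis
    using ghost_inv_echo_time[OF gi] ghost_inv_lock_view[OF gi] unfolding ghost_inv_def
    by (auto simp: less_Suc_eq)
qed

lemma ghost_inv_add_lock:
  assumes gi: "ghost_inv E L clk" and inv: "local_inv i st E L" and cert: "certified E a (view st)"
  shows "ghost_inv E (insert (i, a, view st) L) clk"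
proof -
  have "echo_justified E (insert (i, a, view st) L) p b u t" if "(p, b, u, t) \<in> E" for p b u t
  proof (rule echo_justified_mono[OF ghost_inv_echo_justified[OF gi that] subset_refl])
    show "u \<le> v" if "(p, c, v) \<in> insert (i, a, view st) L" "(p, c, v) \<notin> L" for c v
    proof -
      have "p = i" "v = view st" using that by auto
      then show ?thesis using \<open>(p, b, u, t) \<in> E\<close> inv unfolding local_inv_def history_inv_def by blast
    qed
  qed
  moreover have "1 \<le> view st" using inv unfolding local_inv_def state_inv_def by simp
  ultimately show ?thesis using gi cert unfolding ghost_inv_def by auto
qed

(* Only events of i are added, so the other parties keep their invariants (history_inv_mono). *)
definition sound_step ::
  "nat \<Rightarrow> 'v lst \<Rightarrow> (nat \<times> 'v msg) list \<Rightarrow> 'v echo_log \<Rightarrow> 'v lock_log \<Rightarrow> nat \<Rightarrow> bool" where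
  "sound_step i st' outs E L clk \<longleftrightarrow>
     (\<exists>E' L' clk'. E \<subseteq> E' \<and> L \<subseteq> L' \<and> (\<forall>e \<in> E' - E. fst e = i) \<and> (\<forall>e \<in> L' - L. fst e = i) \<and>
        local_inv i st' E' L' \<and> ghost_inv E' L' clk' \<and> (\<forall>(k, m) \<in> set outs. msg_valid E' L' i m))"

lemma sound_stepI:
  "local_inv i st' E L \<Longrightarrow> ghost_inv E L clk \<Longrightarrow> (\<forall>(k, m) \<in> set outs. msg_valid E L i m) \<Longrightarrow>
   sound_step i st' outs E L clk"
  unfolding sound_step_def by blast

lemma sound_step_echo:
  "local_inv i st' (insert (i, b, u, clk) E) L \<Longrightarrow> ghost_inv (insert (i, b, u, clk) E) L (Suc clk) \<Longrightarrow>
   sound_step i st' [] E L clk"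
  unfolding sound_step_def by (intro exI[of _ "insert (i, b, u, clk) E"] exI[of _ L]) auto

lemma sound_step_lock:
  "local_inv i st' E (insert (i, a, u) L) \<Longrightarrow> ghost_inv E (insert (i, a, u) L) clk \<Longrightarrow>
   sound_step i st' [] E L clk"
  unfolding sound_step_def by (intro exI[of _ E] exI[of _ "insert (i, a, u) L"]) auto

section \<open>Protocol steps\<close>

lemma tally_ok_insert:
  "tally_ok P T \<Longrightarrow> j \<in> {1..n} \<Longrightarrow> (j \<notin> F \<longrightarrow> P j a) \<Longrightarrow> tally_ok P (T(a := insert j (T a)))"
  unfolding tally_ok_def by auto

lemma tally_ok_crossing:
  assumes "tally_ok P T" "j \<in> {1..n}" "j \<notin> F \<longrightarrow> P j a" "crosses (n - f) (T a) (insert j (T a))"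
  shows "\<exists>S. quorum S \<and> (\<forall>j \<in> S - F. P j a)"
  using assms unfolding tally_ok_def crosses_def quorum_def by (intro exI[of _ "insert j (T a)"]) auto

lemma tally_ok_crossing_certified:
  assumes "tally_ok (\<lambda>_ a. certified E a v) T" "j \<in> {1..n}" "j \<notin> F \<longrightarrow> certified E a v"
    "crosses (n - f) (T a) (insert j (T a))"
  shows "certified E a v"
  using tally_ok_crossing[OF assms] quorum_has_correct by blast

lemma valid_proof_advance:
  assumes gi: "ghost_inv E L clk" and k: "valid_proof E k kv pk" "pk < k" "k \<le> int v"
    and val: "certified E val v" and "1 \<le> v"
  shows "valid_proof E (int v) val (if kv \<noteq> val then k else pk)
    \<and> (if kv \<noteq> val then k else pk) < int v"
proof (cases "kv = val")
  case True
  then show ?thesis using k val unfolding valid_proof_def by auto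
next
  case False
  have "k \<noteq> int v"
  proof
    assume "k = int v"
    then have "certified E kv v" using k(1) \<open>1 \<le> v\<close> unfolding valid_proof_def by simp
    then show False using certified_unique[OF gi _ val] False by blast
  qed
  then show ?thesis using False k val unfolding valid_proof_def by auto
qed

lemma proofs_ok_update:
  "proofs_ok E v P \<Longrightarrow> pk < k \<Longrightarrow> k < int v \<Longrightarrow> (j \<notin> F \<longrightarrow> valid_proof E k w pk) \<Longrightarrow>
   proofs_ok E v (P(j := Some (k, w, pk)))"
  unfolding proofs_ok_def by auto

lemma proofs_ok_unlocks:
  assumes ok: "proofs_ok E v P"
    and many: "f + 1 \<le> card {l. \<exists>k w pk. P l = Some (k, w, pk) \<and> (lk \<le> pk \<or> lk \<le> k \<and> w \<noteq> lv)}"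
  shows "proof_unlocks E lk lv v"
proof -
  let ?U = "{l. \<exists>k w pk. P l = Some (k, w, pk) \<and> (lk \<le> pk \<or> lk \<le> k \<and> w \<noteq> lv)}"
  have "card F < card ?U" using many few_faulty by linarith
  then obtain l where "l \<in> ?U" "l \<notin> F" by (rule exists_correct)
  then obtain k w pk where "P l = Some (k, w, pk)" "lk \<le> pk \<or> lk \<le> k \<and> w \<noteq> lv" by blast
  then show ?thesis using ok \<open>l \<notin> F\<close> unfolding proofs_ok_def proof_unlocks_def by blast
qed

lemma local_inv_recv_echo:
  assumes inv: "local_inv i st E L" and gi: "ghost_inv E L clk"
    and j: "j \<in> {1..n}" "j \<notin> F \<longrightarrow> (\<exists>t. (j, val, v, t) \<in> E)"
  shows "local_inv i (recv_echo n f j val v st) E L"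
proof (cases "v = view st")
  case False
  then show ?thesis using inv unfolding recv_echo_def by simp
next
  case True
  have tally: "tally_ok (\<lambda>j a. \<exists>t. (j, a, v, t) \<in> E) (echo_from st)"
    using inv True unfolding local_inv_def state_inv_def by simp
  note tally' = tally_ok_insert[OF tally j]
  show ?thesis
  proof (cases "crosses (n - f) (echo_from st val) (insert j (echo_from st val))")
    case False
    then show ?thesis using inv True tally'
      unfolding local_inv_def state_inv_def history_inv_def recv_echo_def by (simp add: Let_def)
  next
    case crossing: True
    have "certified E val v" using tally_ok_crossing[OF tally j crossing] unfolding certified_def .
    then have "valid_proof E (int v) val (if key1_val st \<noteq> val then key1 st else prev_key1 st)
        \<and> (if key1_val st \<noteq> val then key1 st else prev_key1 st) < int v"
      using inv True valid_proof_advance[OF gi] unfolding local_inv_def state_inv_def by auto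
    then show ?thesis using True crossing inv tally' \<open>certified E val v\<close>
      unfolding local_inv_def state_inv_def history_inv_def recv_echo_def
      by (simp add: Let_def msg_valid_def split: if_splits)
  qed
qed

lemma local_inv_recv_key1:
  assumes inv: "local_inv i st E L" and j: "j \<in> {1..n}" "j \<notin> F \<longrightarrow> certified E val v"
  shows "local_inv i (recv_key1 n f j val v st) E L"
proof (cases "v = view st")
  case False
  then show ?thesis using inv unfolding recv_key1_def by simp
next
  case True
  have tally: "tally_ok (\<lambda>_ a. certified E a v) (key1_from st)"
    using inv True unfolding local_inv_def state_inv_def by simp
  have "crosses (n - f) (key1_from st val) (insert j (key1_from st val)) \<Longrightarrow> certified E val v"
    using tally_ok_crossing_certified[OF tally j] .
  then show ?thesis using inv True tally_ok_insert[OF tally j]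
    unfolding local_inv_def state_inv_def history_inv_def recv_key1_def by (simp add: Let_def msg_valid_def)
qed

lemma local_inv_recv_key2:
  assumes inv: "local_inv i st E L" and j: "j \<in> {1..n}" "j \<notin> F \<longrightarrow> certified E val v"
  shows "local_inv i (recv_key2 n f j val v st) E L"
proof (cases "v = view st")
  case False
  then show ?thesis using inv unfolding recv_key2_def by simp
next
  case True
  have tally: "tally_ok (\<lambda>_ a. certified E a v) (key2_from st)"
    using inv True unfolding local_inv_def state_inv_def by simp
  have "crosses (n - f) (key2_from st val) (insert j (key2_from st val)) \<Longrightarrow> certified E val v"
    using tally_ok_crossing_certified[OF tally j] .
  then show ?thesis using inv True tally_ok_insert[OF tally j]
    unfolding local_inv_def state_inv_def history_inv_def recv_key2_def by (simp add: Let_def msg_valid_def)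
qed

lemma recv_key3_sound:
  assumes inv: "local_inv i st E L" and gi: "ghost_inv E L clk"
    and j: "j \<in> {1..n}" "j \<notin> F \<longrightarrow> certified E val v"
  shows "sound_step i (recv_key3 n f j val v st) [] E L clk"
proof (cases "v = view st")
  case False
  then show ?thesis using inv gi by (simp add: recv_key3_def sound_stepI)
next
  case True
  have tally: "tally_ok (\<lambda>_ a. certified E a v) (key3_from st)"
    using inv True unfolding local_inv_def state_inv_def by simp
  note tally' = tally_ok_insert[OF tally j]
  show ?thesis
  proof (cases "crosses (n - f) (key3_from st val) (insert j (key3_from st val))")
    case False
    then have "local_inv i (recv_key3 n f j val v st) E L"
      using inv True tally' unfolding local_inv_def state_inv_def history_inv_def recv_key3_def
      by (simp add: Let_def)
    then show ?thesis using gi by (intro sound_stepI) simp_all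
  next
    case crossing: True
    let ?L' = "insert (i, val, v) L"
    have cert: "certified E val v" using tally_ok_crossing_certified[OF tally j crossing] .
    have "state_inv i st E ?L'" using inv state_inv_mono unfolding local_inv_def by blast
    moreover have "\<forall>a v'. (i, a, v') \<in> ?L' \<longrightarrow> int v' \<le> int v \<and> v' \<le> v"
      using inv True unfolding local_inv_def state_inv_def history_inv_def by force
    ultimately have "local_inv i (recv_key3 n f j val v st) E ?L'"
      using inv True crossing tally' cert
      unfolding local_inv_def state_inv_def history_inv_def recv_key3_def by (simp add: Let_def msg_valid_def)
    moreover have "ghost_inv E ?L' clk" using ghost_inv_add_lock[OF gi inv] cert True by simp
    ultimately show ?thesis by (rule sound_step_lock)
  qed
qed

lemma local_inv_recv_lock:
  assumes inv: "local_inv i st E L" and j: "j \<in> {1..n}" "j \<notin> F \<longrightarrow> (j, val, v) \<in> L"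
  shows "local_inv i (fst (recv_lock n f j val v st)) E L"
proof (cases "v = view st")
  case False
  then show ?thesis using inv unfolding recv_lock_def by simp
next
  case True
  have tally: "tally_ok (\<lambda>j a. (j, a, v) \<in> L) (lock_from st)"
    using inv True unfolding local_inv_def state_inv_def by simp
  have "crosses (n - f) (lock_from st val) (insert j (lock_from st val)) \<Longrightarrow> lock_quorum L val v"
    using tally_ok_crossing[OF tally j] unfolding lock_quorum_def .
  then show ?thesis using inv True tally_ok_insert[OF tally j]
    unfolding local_inv_def state_inv_def history_inv_def recv_lock_def by (auto simp add: Let_def)
qed

lemma local_inv_recv_proof:
  assumes "local_inv i st E L" "j \<notin> F \<longrightarrow> valid_proof E k1 v1 pk1"
  shows "local_inv i (recv_proof j k1 v1 pk1 v st) E L"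
  using assms proofs_ok_update[of E "view st" "proofs st" pk1 k1 j v1]
  unfolding local_inv_def state_inv_def history_inv_def recv_proof_def by (simp add: Let_def)

lemma recv_propose_sound:
  assumes inv: "local_inv i st E L" and gi: "ghost_inv E L clk"
  shows "sound_step i (recv_propose n j key val v st) [] E L clk"
proof (cases "v = view st \<and> j = primary n v \<and> \<not> propose_recv st")
  case False
  then show ?thesis using inv gi unfolding recv_propose_def by (intro sound_stepI) auto
next
  case True
  then have fresh: "\<forall>a t. (i, a, view st, t) \<notin> E" and no_wait: "echo_wait st = None"
    using inv unfolding local_inv_def history_inv_def by auto
  show ?thesis
  proof (cases "lock st = 0 \<or> val = lock_val st")
    case echo: True
    let ?E' = "insert (i, val, view st, clk) E"
    have "state_inv i st ?E' L" using inv state_inv_mono unfolding local_inv_def by blast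
    then have "local_inv i (recv_propose n j key val v st) ?E' L"
      using inv True echo no_wait unfolding local_inv_def state_inv_def history_inv_def recv_propose_def
      by (auto simp add: msg_valid_def)
    moreover have "ghost_inv ?E' L (Suc clk)" using ghost_inv_add_echo[OF gi inv fresh] echo by blast
    ultimately show ?thesis by (rule sound_step_echo)
  next
    case False
    then have "local_inv i (recv_propose n j key val v st) E L"
      using inv True fresh unfolding local_inv_def state_inv_def history_inv_def recv_propose_def
      by (simp add: Let_def)
    then show ?thesis using gi by (intro sound_stepI) simp_all
  qed
qed

lemma local_inv_enter_view:
  assumes "local_inv p st E L" "view st < w"
  shows "local_inv p (fst (enter_view n w st)) E L"
proof -
  have "\<forall>a v. (p, a, v) \<in> L \<longrightarrow> int v \<le> lock st \<and> v \<le> w"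
    and "\<forall>a u t. (p, a, u, t) \<in> E \<longrightarrow> u \<le> w" "\<forall>a t. (p, a, w, t) \<notin> E"
    using assms unfolding local_inv_def history_inv_def by fastforce+
  then show ?thesis
    using assms unfolding local_inv_def state_inv_def history_inv_def enter_view_def
    by (simp add: tally_ok_def proofs_ok_def msg_valid_def)
qed

lemma local_inv_recv_abort:
  assumes inv: "local_inv i st E L"
  shows "local_inv i (fst (recv_abort n f i j v st)) E L"
    and "\<forall>(k, m) \<in> set (snd (recv_abort n f i j v st)). msg_valid E L i m"
proof -
  have frame: "local_inv i (st\<lparr>habort := H\<rparr>) E L" for H
    using inv unfolding local_inv_def state_inv_def history_inv_def by simp
  have "local_inv i (fst (enter_view n (Suc w) (st\<lparr>habort := H\<rparr>))) E L" if "view st \<le> w" for H w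
    using local_inv_enter_view[OF frame] that by simp
  then show "local_inv i (fst (recv_abort n f i j v st)) E L"
    using inv frame unfolding recv_abort_def Let_def by auto
  show "\<forall>(k, m) \<in> set (snd (recv_abort n f i j v st)). msg_valid E L i m"
    unfolding recv_abort_def Let_def enter_view_def by (auto simp: to_all_def msg_valid_def)
qed

lemma deliver_sound:
  assumes inv: "local_inv i st E L" and gi: "ghost_inv E L clk"
    and j: "j \<in> {1..n}" "j \<notin> F \<longrightarrow> msg_valid E L j m"
  shows "sound_step i (fst (deliver n f i j m st)) (snd (deliver n f i j m st)) E L clk"
proof (cases m)
  case (MRequest v)
  have "local_inv i (st\<lparr>hreq := H\<rparr>) E L" for H
    using inv unfolding local_inv_def state_inv_def history_inv_def by simp
  then show ?thesis using MRequest gi by (intro sound_stepI) (simp_all add: deliver_def)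
next
  case (MDone val)
  have "local_inv i (fst (recv_done n f j val st)) E L"
    using inv unfolding local_inv_def state_inv_def history_inv_def recv_done_def by (simp add: Let_def)
  then show ?thesis using MDone gi
    by (intro sound_stepI) (auto simp: deliver_def recv_done_def Let_def to_all_def msg_valid_def)
next
  case (MAbort v)
  then show ?thesis using local_inv_recv_abort[OF inv] gi by (intro sound_stepI) (simp_all add: deliver_def)
next
  case (MSuggest k3 v3 k2 v2 pk2 v)
  have "local_inv i (recv_suggest n i j k3 v3 k2 v2 pk2 v st) E L"
  proof (cases "v = view st \<and> i = primary n v \<and> j \<notin> sugg_from st")
    case True
    show ?thesis using inv unfolding recv_suggest_def if_P[OF True]
      unfolding local_inv_def state_inv_def history_inv_def by (simp add: Let_def)
  next
    case False
    show ?thesis using inv unfolding recv_suggest_def if_not_P[OF False] .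
  qed
  then show ?thesis using MSuggest gi by (intro sound_stepI) (simp_all add: deliver_def)
next
  case (MProof k1 v1 pk1 v)
  then show ?thesis using local_inv_recv_proof[OF inv] j gi
    by (intro sound_stepI) (simp_all add: deliver_def msg_valid_def)
next
  case (MPropose key val v)
  then show ?thesis using recv_propose_sound[OF inv gi] by (simp add: deliver_def)
next
  case (MEcho val v)
  then show ?thesis using local_inv_recv_echo[OF inv gi j(1)] j(2) gi
    by (intro sound_stepI) (simp_all add: deliver_def msg_valid_def)
next
  case (MKey1 val v)
  then show ?thesis using local_inv_recv_key1[OF inv j(1)] j(2) gi
    by (intro sound_stepI) (simp_all add: deliver_def msg_valid_def)
next
  case (MKey2 val v)
  then show ?thesis using local_inv_recv_key2[OF inv j(1)] j(2) gi
    by (intro sound_stepI) (simp_all add: deliver_def msg_valid_def)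
next
  case (MKey3 val v)
  then show ?thesis using recv_key3_sound[OF inv gi j(1)] j(2) by (simp add: deliver_def msg_valid_def)
next
  case (MLock val v)
  then show ?thesis using local_inv_recv_lock[OF inv j(1)] j(2) gi
    by (intro sound_stepI) (auto simp: deliver_def msg_valid_def recv_lock_def Let_def to_all_def)
qed

lemma internal_step_sound:
  assumes inv: "local_inv i st E L" and gi: "ghost_inv E L clk"
    and step: "internal_step n f i st st' outs"
  shows "sound_step i st' outs E L clk"
  using step unfolding internal_step_def
proof (elim disjE exE conjE, goal_cases)
  \<comment> \<open>send-upon-join, suggest, accept a suggestion, propose, echo, timer\<close>
  case (1 m j)
  then show ?case using inv gi
    by (intro sound_stepI) (auto simp: local_inv_def state_inv_def history_inv_def)
next
  case 2
  then show ?case using inv gi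
    by (intro sound_stepI) (auto simp: local_inv_def state_inv_def history_inv_def msg_valid_def)
next
  case (3 j k3 v3)
  then show ?case using inv gi
    by (intro sound_stepI) (auto simp: local_inv_def state_inv_def history_inv_def)
next
  case (4 j k w)
  then show ?case using inv gi
    by (intro sound_stepI) (auto simp: local_inv_def state_inv_def history_inv_def msg_valid_def)
next
  case (5 val)
  let ?E' = "insert (i, val, view st, clk) E"
  have fresh: "\<forall>a t. (i, a, view st, t) \<notin> E" and "propose_recv st"
    using inv 5(1) unfolding local_inv_def history_inv_def by auto
  have "proofs_ok E (view st) (proofs st)" using inv unfolding local_inv_def state_inv_def by blast
  then have "proof_unlocks E (lock st) (lock_val st) (view st)" using 5(2) by (rule proofs_ok_unlocks)
  then have gi': "ghost_inv ?E' L (Suc clk)" using ghost_inv_add_echo[OF gi inv fresh] by blast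
  have "state_inv i st ?E' L" using inv state_inv_mono unfolding local_inv_def by blast
  then have "local_inv i st' ?E' L"
    using inv 5(3) \<open>propose_recv st\<close> unfolding local_inv_def state_inv_def history_inv_def
    by (auto simp add: msg_valid_def)
  then show ?case using sound_step_echo[OF _ gi'] 5(4) by simp
next
  case 6
  then show ?case using inv gi
    by (intro sound_stepI) (auto simp: local_inv_def state_inv_def history_inv_def to_all_def msg_valid_def)
qed

section \<open>Reachable states\<close>

definition net_inv :: "'v echo_log \<Rightarrow> 'v lock_log \<Rightarrow> (nat \<times> nat \<times> 'v msg) multiset \<Rightarrow> bool" where
  "net_inv E L N \<longleftrightarrow> (\<forall>(j, k, m) \<in># N. j \<in> {1..n} \<and> (j \<notin> F \<longrightarrow> msg_valid E L j m))"

definition sys_inv :: "'v gst \<Rightarrow> 'v echo_log \<Rightarrow> 'v lock_log \<Rightarrow> nat \<Rightarrow> bool" where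
  "sys_inv s E L clk \<longleftrightarrow>
     ghost_inv E L clk \<and> net_inv E L (net s) \<and> (\<forall>p \<in> {1..n} - F. local_inv p (loc s p) E L)"

lemma sys_inv_step:
  assumes inv: "sys_inv s E L clk" and i: "i \<in> {1..n}" "i \<notin> F"
    and step: "sound_step i st' outs E L clk" and N: "set_mset N \<subseteq> set_mset (net s)"
  shows "\<exists>E' L' clk'.
    sys_inv \<lparr>loc = (loc s)(i := st'), net = N + mset (map (\<lambda>(k, m). (i, k, m)) outs)\<rparr> E' L' clk'"
proof -
  obtain E' L' clk' where ext: "E \<subseteq> E'" "L \<subseteq> L'" "\<forall>e \<in> E' - E. fst e = i" "\<forall>e \<in> L' - L. fst e = i"
    and new: "local_inv i st' E' L'" "ghost_inv E' L' clk'" "\<forall>(k, m) \<in> set outs. msg_valid E' L' i m"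
    using step unfolding sound_step_def by blast
  have "j \<in> {1..n} \<and> (j \<notin> F \<longrightarrow> msg_valid E' L' j m)"
    if "(j, k, m) \<in># N + mset (map (\<lambda>(k, m). (i, k, m)) outs)" for j k m
  proof (cases "(j, k, m) \<in># N")
    case True
    then have "(j, k, m) \<in># net s" using N by blast
    then show ?thesis using inv msg_valid_mono[OF _ ext(1,2)] unfolding sys_inv_def net_inv_def by blast
  next
    case False
    then have "j = i" "(k, m) \<in> set outs" using that by auto
    then show ?thesis using i new(3) by auto
  qed
  then have "net_inv E' L' (N + mset (map (\<lambda>(k, m). (i, k, m)) outs))" unfolding net_inv_def by blast
  moreover have "local_inv p (loc s p) E' L'" if "p \<in> {1..n} - F" "p \<noteq> i" for p
  proof -
    have "local_inv p (loc s p) E L" using inv that(1) unfolding sys_inv_def by blast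
    moreover have "\<forall>e \<in> E' - E. fst e \<noteq> p" "\<forall>e \<in> L' - L. fst e \<noteq> p" using ext(3,4) that(2) by auto
    ultimately show ?thesis
      using state_inv_mono[OF _ ext(1,2)] history_inv_mono[OF _ ext(1,2)] unfolding local_inv_def by blast
  qed
  ultimately have "sys_inv \<lparr>loc = (loc s)(i := st'), net = N + mset (map (\<lambda>(k, m). (i, k, m)) outs)\<rparr>
    E' L' clk'" using new unfolding sys_inv_def by auto
  then show ?thesis by blast
qed

lemma local_inv_init: "local_inv p (init_local n x p) {} {}"
  unfolding local_inv_def state_inv_def history_inv_def init_local_def enter_view_def base_state_def
  by (simp add: tally_ok_def proofs_ok_def msg_valid_def valid_proof_def)

lemma reachable_sys_inv: "reachable n f F x s \<Longrightarrow> \<exists>E L clk. sys_inv s E L clk"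
proof (induction rule: reachable.induct)
  case init
  have "ghost_inv {} {} 0" unfolding ghost_inv_def by simp
  moreover have "net_inv {} {} (net (init_gst n F x))"
    unfolding net_inv_def init_gst_def by (auto simp: msg_valid_def)
  moreover have "local_inv p (loc (init_gst n F x) p) {} {}" for p
    unfolding init_gst_def by (simp add: local_inv_init)
  ultimately show ?case unfolding sys_inv_def by blast
next
  case (deliver_step s j i m st' outs)
  then obtain E L clk where inv: "sys_inv s E L clk" by blast
  then have "local_inv i (loc s i) E L" "ghost_inv E L clk" "j \<in> {1..n}" "j \<notin> F \<longrightarrow> msg_valid E L j m"
    using deliver_step.hyps unfolding sys_inv_def net_inv_def by auto
  then have
    "sound_step i (fst (deliver n f i j m (loc s i))) (snd (deliver n f i j m (loc s i))) E L clk"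
    by (rule deliver_sound)
  then have "sound_step i st' outs E L clk" using deliver_step.hyps(6) by simp
  moreover have "set_mset (net s - {#(j, i, m)#}) \<subseteq> set_mset (net s)" by (meson in_diffD subsetI)
  ultimately show ?case using sys_inv_step[OF inv deliver_step.hyps(3,4)] by blast
next
  case (internal s i st' outs)
  then obtain E L clk where inv: "sys_inv s E L clk" by blast
  then have "sound_step i st' outs E L clk"
    using internal_step_sound internal.hyps unfolding sys_inv_def by blast
  then show ?case using sys_inv_step[OF inv internal.hyps(2,3)] by blast
next
  case (byzantine s j k m)
  then obtain E L clk where "sys_inv s E L clk" by blast
  moreover have "j \<in> {1..n}" using byzantine.hyps(2) faulty_parties by blast
  ultimately have "sys_inv (s\<lparr>net := net s + {#(j, k, m)#}\<rparr>) E L clk"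
    using byzantine.hyps(2) unfolding sys_inv_def net_inv_def by auto
  then show ?case by blast
qed

lemma sys_inv_done_by_lock:
  "sys_inv s E L clk \<Longrightarrow> p \<in> {1..n} \<Longrightarrow> p \<notin> F \<Longrightarrow> done_by_lock (loc s p) = Some a \<Longrightarrow>
   \<exists>v. lock_quorum L a v"
  unfolding sys_inv_def local_inv_def state_inv_def by blast

theorem done_by_lock_agree:
  assumes "reachable n f F x s" "i \<in> {1..n}" "i \<notin> F" "i' \<in> {1..n}" "i' \<notin> F"
    and "done_by_lock (loc s i) = Some val" "done_by_lock (loc s i') = Some val'"
  shows "val = val'"
proof -
  obtain E L clk where inv: "sys_inv s E L clk" using reachable_sys_inv[OF assms(1)] by blast
  then have gi: "ghost_inv E L clk" unfolding sys_inv_def by blast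
  obtain v v' where q: "lock_quorum L val v" and q': "lock_quorum L val' v'"
    using sys_inv_done_by_lock[OF inv] assms(2-7) by metis
  show ?thesis
  proof (cases "v \<le> v'")
    case True
    then show ?thesis by (rule lock_quorums_agree[OF gi q q'])
  next
    case False
    then show ?thesis using lock_quorums_agree[OF gi q' q] by simp
  qed
qed

end

theorem lemma2p5:
  fixes n f :: nat and F :: "nat set" and x :: "nat \<Rightarrow> 'v" and s :: "'v gst"
  assumes "3 * f < n"
    and "F \<subseteq> {1..n}" and "card F \<le> f"
    and "reachable n f F x s"
    and "i \<in> {1..n}" and "i \<notin> F" and "i' \<in> {1..n}" and "i' \<notin> F"
    and "done_by_lock (loc s i) = Some val"
    and "done_by_lock (loc s i') = Some val'"
  shows "val = val'"
proof -
  interpret it_hs n f F using assms(1-3) by unfold_locales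
  show ?thesis using done_by_lock_agree[OF assms(4-10)] .
qed

end
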